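(* Let $mG$ be a finite canonical misinformation game and let $mG'\in\mathcal{AD}^*(\{mG\})$ satisfy $\mathcal{AD}(\{mG'\})=\{mG'\}$. Then $NME(mG')\subseteq SME(mG)$.
   Context: A normal-form game is $G=\langle N,S,P\rangle$ with finite players $N$, finite pure strategy sets $S_i$, positions $S=\times_i S_i$, payoffs $P_i:S\to\mathbb{R}$. A misinformation game $mG=\langle G^0,G^1,\dots,G^{|N|}\rangle$ consists of the actual game $G^0$ and subjective games $G^i$; it is canonical if all $G^i=\langle N,S,P^i\rangle$ differ from $G^0$ only in payoffs and in every $G^i$ all players have equally many pure strategies. $NME(mG)$ is the set of profiles $\sigma=(\sigma_1,\dots,\sigma_{|N|})$ such that each $\sigma_i$ is player $i$'s component of some Nash equilibrium of $G^i$. $\chi(\sigma)=\mathrm{supp}(\sigma_1)\times\dots\times\mathrm{supp}(\sigma_{|N|})$. For $\vec v\in S$, $mG_{\vec v}$ is obtained by replacing, in every $P^i$ ($i\ge1$), the payoff vector at position $\vec v$ by $P^0(\vec v)$. For a set $M$ of misinformation games, $\mathcal{AD}(M)=\{mG_{\vec u}: mG\in M,\sigma\in NME(mG),\vec u\in\chi(\sigma)\}$, $\mathcal{AD}^{(0)}(M)=M$, $\mathcal{AD}^{(t+1)}(M)=\mathcal{AD}^{(t)}(\mathcal{AD}(M))$, $\mathcal{AD}^*(M)=\bigcup_{t\ge0}\mathcal{AD}^{(t)}(M)$; the length $\mathfrak{L}$ is the least $t\ge0$ with $\mathcal{AD}^{(t+1)}(M)=\mathcal{AD}^{(t)}(M)$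 and $\mathcal{AD}^\infty(M)=\mathcal{AD}^{(\mathfrak{L})}(M)$. A profile $\sigma$ is a stable misinformed equilibrium of $mG$ if there is $\widehat{mG}\in\mathcal{AD}^\infty(\{mG\})$ with $\sigma\in NME(\widehat{mG})$ and $\widehat{mG}_{\vec v}=\widehat{mG}$ for all $\vec v\in\chi(\sigma)$; $SME(mG)$ is the set of these. *)

theory Defs
  imports Complex_Main "HOL-Library.FuncSet"
begin

text \<open>All games G^0, G^1, ..., G^n share the pure strategy sets S i (canonical), so a
misinformation game is given by the actual payoff function P^0 and, for every
player i, the subjective payoff function P^i.\<close>

type_synonym ('n, 's) payoff = "('n \<Rightarrow> 's) \<Rightarrow> 'n \<Rightarrow> real"
type_synonym ('n, 's) mgame = "('n, 's) payoff \<times> ('n \<Rightarrow> ('n, 's) payoff)"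

definition positions :: "('n \<Rightarrow> 's set) \<Rightarrow> ('n \<Rightarrow> 's) set" where
  "positions S = Pi UNIV S"

definition canonical :: "('n::finite \<Rightarrow> 's set) \<Rightarrow> bool" where
  "canonical S \<longleftrightarrow> (\<forall>i. finite (S i) \<and> S i \<noteq> {}) \<and> (\<forall>i j. card (S i) = card (S j))"

definition mixed :: "('n \<Rightarrow> 's set) \<Rightarrow> 'n \<Rightarrow> ('s \<Rightarrow> real) \<Rightarrow> bool" where
  "mixed S i t \<longleftrightarrow> (\<forall>s. 0 \<le> t s) \<and> (\<forall>s. s \<notin> S i \<longrightarrow> t s = 0) \<and> sum t (S i) = 1"

definition EU :: "('n::finite \<Rightarrow> 's set) \<Rightarrow> ('n, 's) payoff \<Rightarrow> ('n \<Rightarrow> 's \<Rightarrow> real) \<Rightarrow> 'n \<Rightarrow> real" where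
  "EU S P \<sigma> i = (\<Sum>v\<in>positions S. (\<Prod>j\<in>UNIV. \<sigma> j (v j)) * P v i)"

definition nash :: "('n::finite \<Rightarrow> 's set) \<Rightarrow> ('n, 's) payoff \<Rightarrow> ('n \<Rightarrow> 's \<Rightarrow> real) \<Rightarrow> bool" where
  "nash S P \<sigma> \<longleftrightarrow> (\<forall>i. mixed S i (\<sigma> i)) \<and>
     (\<forall>i t. mixed S i t \<longrightarrow> EU S P (\<sigma>(i := t)) i \<le> EU S P \<sigma> i)"

definition NME :: "('n::finite \<Rightarrow> 's set) \<Rightarrow> ('n, 's) mgame \<Rightarrow> ('n \<Rightarrow> 's \<Rightarrow> real) set" where
  "NME S mG = {\<sigma>. \<forall>i. \<exists>\<tau>. nash S (snd mG i) \<tau> \<and> \<sigma> i = \<tau> i}"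

definition supp :: "('s \<Rightarrow> real) \<Rightarrow> 's set" where
  "supp t = {s. t s \<noteq> 0}"

definition chi :: "('n \<Rightarrow> 's \<Rightarrow> real) \<Rightarrow> ('n \<Rightarrow> 's) set" where
  "chi \<sigma> = {v. \<forall>i. v i \<in> supp (\<sigma> i)}"

definition upd :: "('n, 's) mgame \<Rightarrow> ('n \<Rightarrow> 's) \<Rightarrow> ('n, 's) mgame" where
  "upd mG v = (fst mG, \<lambda>i w. if w = v then fst mG v else snd mG i w)"

definition AD :: "('n::finite \<Rightarrow> 's set) \<Rightarrow> ('n, 's) mgame set \<Rightarrow> ('n, 's) mgame set" where
  "AD S M = {upd mG u | mG \<sigma> u. mG \<in> M \<and> \<sigma> \<in> NME S mG \<and> u \<in> chi \<sigma>}"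

definition ADstar :: "('n::finite \<Rightarrow> 's set) \<Rightarrow> ('n, 's) mgame set \<Rightarrow> ('n, 's) mgame set" where
  "ADstar S M = (\<Union>t. (AD S ^^ t) M)"

definition ADlength :: "('n::finite \<Rightarrow> 's set) \<Rightarrow> ('n, 's) mgame set \<Rightarrow> nat" where
  "ADlength S M = (LEAST t. (AD S ^^ Suc t) M = (AD S ^^ t) M)"

definition ADinf :: "('n::finite \<Rightarrow> 's set) \<Rightarrow> ('n, 's) mgame set \<Rightarrow> ('n, 's) mgame set" where
  "ADinf S M = (AD S ^^ ADlength S M) M"

definition SME :: "('n::finite \<Rightarrow> 's set) \<Rightarrow> ('n, 's) mgame \<Rightarrow> ('n \<Rightarrow> 's \<Rightarrow> real) set" where
  "SME S mG = {\<sigma>. \<exists>g\<in>ADinf S {mG}. \<sigma> \<in> NME S g \<and> (\<forall>v\<in>chi \<sigma>. upd g v = g)}"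

end

theory Submission
  imports Defs
begin

text \<open>An adjustment step either leaves a game unchanged or overwrites a subjective payoff
vector that differs from the actual one, so the number of pairs (player, position) at which
subjective and actual payoffs disagree strictly decreases along every non-trivial step.
As \<open>AD\<close> acts pointwise on sets of games, its iterates on a single game therefore stabilise
and the length is well defined. A game fixed by \<open>AD\<close> that is reached after \<open>t\<close> steps is,
through its self-loop, reached after every later number of steps, so it lies in \<open>AD\<^sup>\<infinity>\<close>;
being fixed, it meets the stability condition for each of its natural misinformed equilibria.\<close>

definition post :: "('a \<Rightarrow> 'a set) \<Rightarrow> 'a set \<Rightarrow> 'a set" where
  "post succ A = (\<Union>x\<in>A. succ x)"

lemma funpow_post_eq_UN: "(post succ ^^ n) A = (\<Union>a\<in>A. (post succ ^^ n) {a})"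
proof (induction n arbitrary: A)
  case 0
  then show ?case by simp
next
  case (Suc n)
  have "(post succ ^^ Suc n) A = (post succ ^^ n) (post succ A)"
    by (simp only: funpow_Suc_right comp_apply)
  also have "\<dots> = (\<Union>b\<in>post succ A. (post succ ^^ n) {b})"
    by (rule Suc)
  also have "\<dots> = (\<Union>a\<in>A. \<Union>b\<in>succ a. (post succ ^^ n) {b})"
    by (auto simp: post_def)
  also have "\<dots> = (\<Union>a\<in>A. (post succ ^^ n) (succ a))"
    by (simp only: Suc[symmetric])
  also have "\<dots> = (\<Union>a\<in>A. (post succ ^^ Suc n) {a})"
    by (simp only: funpow_Suc_right comp_apply) (simp add: post_def)
  finally show ?case .
qed

lemma funpow_post_Suc_singleton:
  "(post succ ^^ Suc n) {x} =
     (\<Union>y\<in>succ x - {x}. (post succ ^^ n) {y}) \<union> (if x \<in> succ x then (post succ ^^ n) {x} else {})"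
proof -
  have "(post succ ^^ Suc n) {x} = (\<Union>y\<in>succ x. (post succ ^^ n) {y})"
    by (simp only: funpow_Suc_right comp_apply funpow_post_eq_UN[where A = "post succ {x}"])
      (simp add: post_def)
  then show ?thesis by auto
qed

lemma funpow_post_singleton_stable:
  fixes \<mu> :: "'a \<Rightarrow> nat"
  assumes decreasing: "\<And>x y. y \<in> succ x \<Longrightarrow> y \<noteq> x \<Longrightarrow> \<mu> y < \<mu> x"
  shows "\<mu> x < n \<Longrightarrow> (post succ ^^ Suc n) {x} = (post succ ^^ n) {x}"
proof (induction "\<mu> x" arbitrary: x n rule: less_induct)
  case less
  let ?F = "post succ"
  obtain m where n: "n = Suc m" and "\<mu> x \<le> m"
    using less.prems by (cases n) auto
  define R where "R k = (\<Union>y\<in>succ x - {x}. (?F ^^ k) {y})" for k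
  have "(?F ^^ Suc m) {y} = (?F ^^ m) {y}" if "y \<in> succ x - {x}" for y
  proof -
    have "\<mu> y < \<mu> x" using decreasing that by blast
    then show ?thesis using less.hyps \<open>\<mu> x \<le> m\<close> by simp
  qed
  then have "R n = R m"
    unfolding R_def n by simp
  moreover have "(?F ^^ Suc n) {x} = R n \<union> (if x \<in> succ x then (?F ^^ n) {x} else {})"
    unfolding R_def by (rule funpow_post_Suc_singleton)
  moreover have "(?F ^^ n) {x} = R m \<union> (if x \<in> succ x then (?F ^^ m) {x} else {})"
    unfolding R_def n by (rule funpow_post_Suc_singleton)
  ultimately show ?case
    by (auto simp del: funpow.simps)
qed

lemma funpow_post_self_loop:
  assumes "x \<in> succ x" "x \<in> (post succ ^^ n) A"
  shows "x \<in> (post succ ^^ (n + k)) A"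
  using assms by (induction k) (auto simp: post_def)

lemma funpow_add_stable:
  fixes f :: "'a \<Rightarrow> 'a"
  assumes "(f ^^ Suc n) x = (f ^^ n) x"
  shows "(f ^^ (n + k)) x = (f ^^ n) x"
proof (induction k)
  case (Suc k)
  have "(f ^^ Suc (n + k)) x = f ((f ^^ n) x)"
    using Suc.IH by simp
  also have "\<dots> = (f ^^ n) x"
    using assms by simp
  finally show ?case by simp
qed simp

lemma finite_positions:
  fixes S :: "'n::finite \<Rightarrow> 's set"
  assumes "\<And>i. finite (S i)"
  shows "finite (positions S)"
  unfolding positions_def using assms by (metis PiE_UNIV_domain finite_PiE finite_UNIV)

lemma chi_subset_positions:
  assumes "\<sigma> \<in> NME S g"
  shows "chi \<sigma> \<subseteq> positions S"
proof
  fix u assume u: "u \<in> chi \<sigma>"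
  have "u i \<in> S i" for i
  proof -
    obtain \<tau> where "nash S (snd g i) \<tau>" "\<sigma> i = \<tau> i"
      using assms unfolding NME_def by blast
    then have "mixed S i (\<sigma> i)" unfolding nash_def by auto
    moreover have "\<sigma> i (u i) \<noteq> 0" using u unfolding chi_def supp_def by auto
    ultimately show ?thesis unfolding mixed_def by auto
  qed
  then show "u \<in> positions S" unfolding positions_def by auto
qed

lemma post_AD_singletons: "post (\<lambda>g. AD S {g}) = AD S"
  unfolding AD_def post_def by (rule ext) blast

definition misinformed :: "('n \<Rightarrow> 's set) \<Rightarrow> ('n, 's) mgame \<Rightarrow> ('n \<times> ('n \<Rightarrow> 's)) set" where
  "misinformed S g = {(i, w). w \<in> positions S \<and> snd g i w \<noteq> fst g w}"

lemma card_misinformed_upd_less: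
  fixes S :: "'n::finite \<Rightarrow> 's set"
  assumes "finite (positions S)" "u \<in> positions S" "upd g u \<noteq> g"
  shows "card (misinformed S (upd g u)) < card (misinformed S g)"
proof -
  have "upd g u = g" if "\<forall>i. snd g i u = fst g u"
    using that by (intro prod_eqI ext) (auto simp: upd_def)
  then obtain i where i: "snd g i u \<noteq> fst g u"
    using assms(3) by blast
  have "misinformed S g \<subseteq> UNIV \<times> positions S"
    unfolding misinformed_def by auto
  then have "finite (misinformed S g)"
    using assms(1) by (simp add: finite_subset)
  moreover have "misinformed S (upd g u) \<subset> misinformed S g"
    using i assms(2) by (auto simp: misinformed_def upd_def)
  ultimately show ?thesis by (rule psubset_card_mono)
qed

lemma AD_funpow_singleton_stable:
  assumes "finite (positions S)" "card (misinformed S g) < n"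
  shows "(AD S ^^ Suc n) {g} = (AD S ^^ n) {g}"
proof -
  have decreasing: "card (misinformed S h') < card (misinformed S h)"
    if step: "h' \<in> AD S {h}" and changed: "h' \<noteq> h" for h h'
  proof -
    obtain \<sigma> u where "\<sigma> \<in> NME S h" "u \<in> chi \<sigma>" "h' = upd h u"
      using step unfolding AD_def by blast
    then show ?thesis
      using card_misinformed_upd_less[OF assms(1)] chi_subset_positions changed by blast
  qed
  have "(post (\<lambda>h. AD S {h}) ^^ Suc n) {g} = (post (\<lambda>h. AD S {h}) ^^ n) {g}"
    by (rule funpow_post_singleton_stable[where \<mu> = "\<lambda>h. card (misinformed S h)"])
      (use decreasing assms(2) in auto)
  then show ?thesis
    by (simp only: post_AD_singletons)
qed

lemma ADinf_eq_funpow: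
  assumes "finite (positions S)" "ADlength S {g} \<le> n"
  shows "(AD S ^^ n) {g} = ADinf S {g}"
proof -
  let ?L = "ADlength S {g}"
  have "(AD S ^^ Suc ?L) {g} = (AD S ^^ ?L) {g}"
    unfolding ADlength_def
    by (rule LeastI[of _ "Suc (card (misinformed S g))"], rule AD_funpow_singleton_stable[OF assms(1)]) simp
  then show ?thesis
    using funpow_add_stable[where f = "AD S" and n = ?L and k = "n - ?L"] assms(2) by (simp add: ADinf_def)
qed

lemma fixed_ADstar_in_ADinf:
  assumes "finite (positions S)" "g \<in> ADstar S {mG}" "g \<in> AD S {g}"
  shows "g \<in> ADinf S {mG}"
proof -
  obtain t where "g \<in> (AD S ^^ t) {mG}"
    using assms(2) unfolding ADstar_def by blast
  then have "g \<in> (AD S ^^ (t + ADlength S {mG})) {mG}"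
    by (rule funpow_post_self_loop[where succ = "\<lambda>h. AD S {h}", unfolded post_AD_singletons, OF assms(3)])
  moreover have "(AD S ^^ (t + ADlength S {mG})) {mG} = ADinf S {mG}"
    by (rule ADinf_eq_funpow[OF assms(1)]) simp
  ultimately show ?thesis by (simp only:)
qed

lemma NME_subset_SME_if_fixed:
  assumes "g \<in> ADinf S {mG}" "AD S {g} \<subseteq> {g}"
  shows "NME S g \<subseteq> SME S mG"
proof
  fix \<sigma> assume \<sigma>: "\<sigma> \<in> NME S g"
  have "upd g v = g" if "v \<in> chi \<sigma>" for v
  proof -
    have "upd g v \<in> AD S {g}" unfolding AD_def using \<sigma> that by blast
    then show ?thesis using assms(2) by blast
  qed
  then show "\<sigma> \<in> SME S mG"
    unfolding SME_def using assms(1) \<sigma> by auto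
qed

theorem proposition14:
  fixes S :: "'n::finite \<Rightarrow> 's set" and mG mG' :: "('n, 's) mgame"
  assumes "canonical S"
    and "mG' \<in> ADstar S {mG}"
    and "AD S {mG'} = {mG'}"
  shows "NME S mG' \<subseteq> SME S mG"
proof -
  have "finite (positions S)"
    using assms(1) by (simp add: canonical_def finite_positions)
  then have "mG' \<in> ADinf S {mG}"
    by (rule fixed_ADstar_in_ADinf[OF _ assms(2)]) (simp add: assms(3))
  then show ?thesis
    by (rule NME_subset_SME_if_fixed) (simp add: assms(3))
qed

end
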